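(* Let $\mathcal I\subseteq\mathcal P(\mathbb R)$ be a proper, translation-invariant $\sigma$-ideal containing all singletons and having a Borel base, and assume that $\mathcal I$ has the Steinhaus property and $\operatorname{non}(\mathcal I)<\mathfrak c$. Then there exists a set $C\subseteq\mathbb R$ which is a ${<}\mathfrak c$-covering and is completely $\mathcal I$-nonmeasurable.
   Context: $\mathfrak c=|\mathbb R|$. Borel base: every $A\in\mathcal I$ is contained in a Borel set in $\mathcal I$. $\operatorname{non}(\mathcal I)=\min\{|A|:A\subseteq\mathbb R,\ A\notin\mathcal I\}$. Steinhaus property: for all Borel $A,B\notin\mathcal I$ there is a nonempty open $U\subseteq A-B$. A set $N$ is completely $\mathcal I$-nonmeasurable if for every Borel $A\notin\mathcal I$, both $A\cap N\notin\mathcal I$ and $A\setminus N\notin\mathcal I$. A set $C$ is a ${<}\mathfrak c$-covering if for every $B\subseteq\mathbb R$ with $|B|<\mathfrak c$ there is $x\in\mathbb R$ with $B+x\subseteq C$. *)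

theory Defs
  imports "HOL-Analysis.Analysis" "HOL-Library.Equipollence"
begin

definition sigma_ideal :: "real set set \<Rightarrow> bool" where
  "sigma_ideal I \<longleftrightarrow> {} \<in> I \<and>
     (\<forall>A B. A \<in> I \<and> B \<subseteq> A \<longrightarrow> B \<in> I) \<and>
     (\<forall>F :: nat \<Rightarrow> real set. (\<forall>n. F n \<in> I) \<longrightarrow> (\<Union>n. F n) \<in> I)"

definition proper_ideal :: "real set set \<Rightarrow> bool" where
  "proper_ideal I \<longleftrightarrow> UNIV \<notin> I"

definition translation_invariant :: "real set set \<Rightarrow> bool" where
  "translation_invariant I \<longleftrightarrow> (\<forall>A \<in> I. \<forall>x::real. (\<lambda>a. a + x) ` A \<in> I)"

definition contains_singletons :: "real set set \<Rightarrow> bool" where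
  "contains_singletons I \<longleftrightarrow> (\<forall>x::real. {x} \<in> I)"

definition borel_base :: "real set set \<Rightarrow> bool" where
  "borel_base I \<longleftrightarrow> (\<forall>A \<in> I. \<exists>B \<in> sets borel. A \<subseteq> B \<and> B \<in> I)"

definition non_lt_continuum :: "real set set \<Rightarrow> bool" where
  "non_lt_continuum I \<longleftrightarrow> (\<exists>A :: real set. A \<notin> I \<and> A \<prec> (UNIV :: real set))"

definition steinhaus :: "real set set \<Rightarrow> bool" where
  "steinhaus I \<longleftrightarrow> (\<forall>A \<in> sets borel. \<forall>B \<in> sets borel. A \<notin> I \<and> B \<notin> I \<longrightarrow>
     (\<exists>U. open U \<and> U \<noteq> {} \<and> U \<subseteq> {a - b | a b. a \<in> A \<and> b \<in> B}))"

definition completely_nonmeasurable :: "real set set \<Rightarrow> real set \<Rightarrow> bool" where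
  "completely_nonmeasurable I N \<longleftrightarrow>
     (\<forall>A \<in> sets borel. A \<notin> I \<longrightarrow> A \<inter> N \<notin> I \<and> A - N \<notin> I)"

definition lt_c_covering :: "real set \<Rightarrow> bool" where
  "lt_c_covering C \<longleftrightarrow> (\<forall>B :: real set. B \<prec> (UNIV :: real set) \<longrightarrow>
     (\<exists>x. (\<lambda>b. b + x) ` B \<subseteq> C))"

end

theory Submission
  imports Defs
begin

text \<open>Pick \<open>T \<notin> I\<close> of size below the continuum and let \<open>X = T + \<rat>\<close>, which is still small;
  the complement \<open>C\<close> of \<open>X\<close> works. For small \<open>B\<close> the difference set \<open>X - B\<close> is not all of \<open>\<real>\<close>,
  so some translate of \<open>B\<close> misses \<open>X\<close>. For a Borel \<open>B \<notin> I\<close>, the Steinhaus property puts the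
  complement of \<open>B + \<rat>\<close> into \<open>I\<close>. If \<open>B \<inter> X \<in> I\<close>, then \<open>T\<close> is covered by that complement
  and \<open>(B \<inter> X) + \<rat>\<close>, so \<open>T \<in> I\<close>. If \<open>B \<inter> C \<in> I\<close>, the Borel base leaves a Borel \<open>B' \<subseteq> X\<close>
  outside \<open>I\<close>, so \<open>X \<supseteq> B' + \<rat>\<close> has complement in \<open>I\<close>; but some translate of the small set \<open>X\<close>
  is disjoint from \<open>X\<close>, and then \<open>\<real>\<close> is the union of two translates of \<open>- X\<close>.\<close>

lemma times_lesspoll_if_lepoll:
  assumes "infinite C" "A \<lesssim> B" "B \<prec> C"
  shows "A \<times> B \<prec> C"
proof (cases "finite B")
  case True
  then have "finite (A \<times> B)"
    using assms(2) inj_on_finite unfolding lepoll_def by blast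
  then show ?thesis
    using assms(1) by (simp add: finite_lesspoll_infinite)
next
  case False
  then have "B \<times> B \<approx> B"
    by (simp add: eqpoll_iff_card_of_ordIso card_of_Times_same_infinite)
  then have "A \<times> B \<lesssim> B"
    using times_lepoll_mono[OF assms(2) lepoll_refl] eqpoll_imp_lepoll lepoll_trans by blast
  then show ?thesis
    using assms(3) by (rule lesspoll_trans1)
qed

lemma times_lesspoll_infinite:
  assumes "infinite C" "A \<prec> C" "B \<prec> C"
  shows "A \<times> B \<prec> C"
proof -
  have "A \<lesssim> B \<or> B \<lesssim> A"
    using ordLeq_total[OF card_of_Well_order card_of_Well_order]
    by (simp add: lepoll_def card_of_ordLeq)
  then show ?thesis
  proof
    assume "B \<lesssim> A"
    then have "B \<times> A \<prec> C"
      by (rule times_lesspoll_if_lepoll[OF assms(1) _ assms(2)])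
    then show ?thesis
      by (rule eq_lesspoll_trans[OF times_commute_eqpoll])
  qed (use assms(1,3) times_lesspoll_if_lepoll in blast)
qed

lemma translate_disjoint_exists:
  fixes X B :: "'a::ab_group_add set"
  assumes "infinite (UNIV :: 'a set)" "X \<prec> (UNIV :: 'a set)" "B \<prec> (UNIV :: 'a set)"
  shows "\<exists>x. (\<lambda>b. b + x) ` B \<inter> X = {}"
proof -
  have "(\<lambda>(a, b). a - b) ` (X \<times> B) \<prec> (UNIV :: 'a set)"
    using image_lepoll times_lesspoll_infinite[OF assms] by (rule lesspoll_trans1)
  then obtain x where x: "x \<notin> (\<lambda>(a, b). a - b) ` (X \<times> B)"
    unfolding lesspoll_def by (metis UNIV_eq_I eqpoll_refl)
  have "b + x \<notin> X" if "b \<in> B" for b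
    using x that by (force intro: image_eqI[where x = "(b + x, b)"])
  then show ?thesis by blast
qed

lemma Rats_lesspoll_UNIV: "(\<rat> :: real set) \<prec> (UNIV :: real set)"
  unfolding lesspoll_def
  using countable_eqpoll[OF countable_rat] uncountable_UNIV_real
  by (metis subset_UNIV subset_imp_lepoll eqpoll_sym)

lemma sigma_ideal_subset: "sigma_ideal I \<Longrightarrow> A \<in> I \<Longrightarrow> B \<subseteq> A \<Longrightarrow> B \<in> I"
  unfolding sigma_ideal_def by blast

lemma sigma_ideal_UN_countable:
  assumes "sigma_ideal I" "countable S" "\<And>s. s \<in> S \<Longrightarrow> F s \<in> I"
  shows "(\<Union>s\<in>S. F s) \<in> I"
proof (cases "S = {}")
  case True
  then show ?thesis
    using assms(1) by (simp add: sigma_ideal_def)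
next
  case False
  have "(\<Union>n. F (from_nat_into S n)) \<in> I"
    using assms(1) from_nat_into[OF False] assms(3) by (simp add: sigma_ideal_def)
  moreover have "(\<Union>s\<in>S. F s) = (\<Union>n. F (from_nat_into S n))"
    using range_from_nat_into[OF False assms(2)] by (metis image_image)
  ultimately show ?thesis by simp
qed

lemma sigma_ideal_Un: "sigma_ideal I \<Longrightarrow> A \<in> I \<Longrightarrow> B \<in> I \<Longrightarrow> A \<union> B \<in> I"
  using sigma_ideal_UN_countable[of I "{A, B}" id] by force

lemma compl_lesspoll_notin_ideal:
  assumes "sigma_ideal I" "proper_ideal I" "translation_invariant I"
    and "X \<prec> (UNIV :: real set)"
  shows "- X \<notin> I"
proof
  assume "- X \<in> I"
  obtain x where x: "(\<lambda>b. b + x) ` X \<inter> X = {}"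
    using translate_disjoint_exists[OF infinite_UNIV_char_0 assms(4,4)] by blast
  have "(\<lambda>a. a + - x) ` (- X) \<in> I"
    using \<open>- X \<in> I\<close> assms(3) unfolding translation_invariant_def by blast
  then have "(\<lambda>a. a - x) ` (- X) \<in> I"
    by simp
  then have "- X \<union> (\<lambda>a. a - x) ` (- X) \<in> I"
    using assms(1) \<open>- X \<in> I\<close> by (simp add: sigma_ideal_Un)
  moreover have "- X \<union> (\<lambda>a. a - x) ` (- X) = UNIV"
  proof -
    have "z \<in> (\<lambda>a. a - x) ` (- X)" if "z \<in> X" for z
      using x that by (force intro: image_eqI[where x = "z + x"])
    then show ?thesis by blast
  qed
  ultimately show False
    using assms(2) unfolding proper_ideal_def by simp
qed

definition rat_translates :: "real set \<Rightarrow> real set" where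
  "rat_translates A = (\<Union>q\<in>\<rat>. (\<lambda>a. a + q) ` A)"

lemma rat_translates_mono: "A \<subseteq> B \<Longrightarrow> rat_translates A \<subseteq> rat_translates B"
  unfolding rat_translates_def by blast

lemma rat_translates_idem: "rat_translates (rat_translates A) = rat_translates A"
  unfolding rat_translates_def
  by (force simp: add.assoc intro: Rats_add Rats_0 image_eqI[where x = "_ - 0"])

lemma rat_translates_lesspoll:
  assumes "A \<prec> (UNIV :: real set)"
  shows "rat_translates A \<prec> (UNIV :: real set)"
proof -
  have "rat_translates A = (\<lambda>(a, q). a + q) ` (A \<times> \<rat>)"
    unfolding rat_translates_def by auto
  then show ?thesis
    using lesspoll_trans1[OF image_lepoll
        times_lesspoll_infinite[OF infinite_UNIV_char_0 assms Rats_lesspoll_UNIV]]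
    by simp
qed

lemma rat_translates_borel:
  assumes "B \<in> sets borel"
  shows "rat_translates B \<in> sets borel"
proof -
  have "(\<lambda>b. b + q) ` B = (\<lambda>x. x - q) -` B" for q :: real
    by (force intro: image_eqI[where x = "_ - q"])
  moreover have "(\<lambda>x. x - q) -` B \<in> sets borel" for q :: real
    by (rule measurable_sets_borel[OF _ assms]) measurable
  ultimately show ?thesis
    unfolding rat_translates_def by (simp add: sets.countable_UN'' countable_rat)
qed

lemma rat_translates_in_ideal:
  assumes "sigma_ideal I" "translation_invariant I" "A \<in> I"
  shows "rat_translates A \<in> I"
  unfolding rat_translates_def
  using assms by (intro sigma_ideal_UN_countable countable_rat) (auto simp: translation_invariant_def)

text \<open>A rational \<open>q\<close> in the open subset of \<open>E - B\<close> makes the complement \<open>E\<close> of \<open>B + \<rat>\<close> meet \<open>B + q\<close>.\<close>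
lemma steinhaus_compl_rat_translates:
  assumes "steinhaus I" "B \<in> sets borel" "B \<notin> I"
  shows "- rat_translates B \<in> I"
proof (rule ccontr)
  let ?E = "- rat_translates B"
  assume "?E \<notin> I"
  moreover have "?E \<in> sets borel"
    using rat_translates_borel[OF assms(2)] by (rule borel_comp)
  ultimately obtain U where U: "open U" "U \<noteq> {}" "U \<subseteq> {a - b | a b. a \<in> ?E \<and> b \<in> B}"
    using assms unfolding steinhaus_def by blast
  then obtain q where "q \<in> \<rat>" "q \<in> U"
    using open_Int_closure_eq_empty[of U \<rat>] by (auto simp: Rats_closure_real)
  then obtain a b where "a \<in> ?E" "b \<in> B" "a = b + q"
    using U(3) by force
  then show False
    using \<open>q \<in> \<rat>\<close> unfolding rat_translates_def by blast
qed

lemma borel_inter_rat_translates_notin_ideal: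
  assumes "sigma_ideal I" "translation_invariant I" "steinhaus I"
    and "T \<notin> I" "B \<in> sets borel" "B \<notin> I"
  shows "B \<inter> rat_translates T \<notin> I"
proof
  assume "B \<inter> rat_translates T \<in> I"
  then have "- rat_translates B \<union> rat_translates (B \<inter> rat_translates T) \<in> I"
    using assms by (simp add: sigma_ideal_Un steinhaus_compl_rat_translates rat_translates_in_ideal)
  moreover have "T \<subseteq> - rat_translates B \<union> rat_translates (B \<inter> rat_translates T)"
  proof
    fix t assume "t \<in> T"
    show "t \<in> - rat_translates B \<union> rat_translates (B \<inter> rat_translates T)"
    proof (cases "t \<in> rat_translates B")
      case True
      then obtain q b where "q \<in> \<rat>" "b \<in> B" "t = b + q"
        unfolding rat_translates_def by blast
      moreover from this have "b \<in> rat_translates T"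
        using \<open>t \<in> T\<close> Rats_minus_iff[of q] unfolding rat_translates_def
        by (auto intro!: bexI[where x = "- q"] image_eqI[where x = t])
      ultimately show ?thesis
        unfolding rat_translates_def by blast
    qed simp
  qed
  ultimately show False
    using assms(1,4) sigma_ideal_subset by blast
qed

lemma borel_diff_rat_translates_notin_ideal:
  assumes "sigma_ideal I" "proper_ideal I" "translation_invariant I" "borel_base I"
    and "steinhaus I" "T \<prec> (UNIV :: real set)" "B \<in> sets borel" "B \<notin> I"
  shows "B - rat_translates T \<notin> I"
proof
  assume "B - rat_translates T \<in> I"
  then obtain H where H: "H \<in> sets borel" "B - rat_translates T \<subseteq> H" "H \<in> I"
    using assms(4) unfolding borel_base_def by blast
  have "B - H \<notin> I"
    using assms(1,8) H(3) sigma_ideal_Un sigma_ideal_subset[of I "B - H \<union> H" B] by blast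
  then have "- rat_translates (B - H) \<in> I"
    using assms(5,7) H(1) by (simp add: steinhaus_compl_rat_translates sets.Diff)
  moreover have "rat_translates (B - H) \<subseteq> rat_translates T"
    using rat_translates_mono[of "B - H" "rat_translates T"] H(2) by (auto simp: rat_translates_idem)
  ultimately have "- rat_translates T \<in> I"
    using assms(1) sigma_ideal_subset by blast
  then show False
    using compl_lesspoll_notin_ideal[OF assms(1-3) rat_translates_lesspoll[OF assms(6)]] by simp
qed

theorem mainTheorem8:
  fixes I :: "real set set"
  assumes "sigma_ideal I" and "proper_ideal I" and "translation_invariant I"
    and "contains_singletons I" and "borel_base I"
    and "steinhaus I" and "non_lt_continuum I"
  shows "\<exists>C :: real set. lt_c_covering C \<and> completely_nonmeasurable I C"
proof -
  obtain T where T: "T \<notin> I" "T \<prec> (UNIV :: real set)"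
    using assms(7) unfolding non_lt_continuum_def by blast
  define C where "C = - rat_translates T"
  have "lt_c_covering C"
    unfolding lt_c_covering_def C_def
    using translate_disjoint_exists[OF infinite_UNIV_char_0 rat_translates_lesspoll[OF T(2)]]
    by blast
  moreover have "completely_nonmeasurable I C"
    unfolding completely_nonmeasurable_def C_def Diff_eq[symmetric] Diff_Compl
    using assms T
    by (simp add: borel_inter_rat_translates_notin_ideal borel_diff_rat_translates_notin_ideal)
  ultimately show ?thesis by blast
qed

end
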